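(* For every integer $N\ge16$ and $\rho\in[2/3,1)$ there is $C<\infty$ such that for every interval $I\subset\mathbb R$, $$\int_I\big|H_\flat(\mathbf 1_I\widehat\omega)\big|^2\,d\widehat{\dot\sigma}=\sum_{k,j:\dot z^k_j\in I}\widehat s^k_j\,\big|H_\flat(\mathbf 1_I\widehat\omega)(\dot z^k_j)\big|^2\le C\,\widehat\omega(I).$$
   Context: Cantor intervals: fix an integer $N\ge16$ and $\rho\in[2/3,1)$. Set $I^0_1=[0,1]$. Each interval $I=[a,a+N^{-k}]$ of generation $k$ has two children of generation $k+1$: the left child $I_-=[a,a+N^{-k-1}]$ and the right child $I_+=[a+N^{-k}-N^{-k-1},a+N^{-k}]$. The $2^k$ intervals of generation $k$ are denoted $I^k_j$, $1\le j\le 2^k$, numbered left to right; $\mathcal D$ is the collection of all of them. $\dot z^k_j$ is the center of $I^k_j$. The Cantor set is $\mathsf E^{(N)}=\bigcap_{k}\bigcup_{j}I^k_j$. Redistributed Cantor measure: with $\eta=1/N$, $\widehat\omega$ is the unique Borel probability measure supported on $\mathsf E^{(N)}$ such that $\widehat\omega(I^1_1)=\widehat\omega(I^1_2)=\frac12$ and for every $I\in\mathcal D$ of generation $\ge1$: if $I$ is the left child of its parent then $\widehat\omega(I_-)=\frac{1+\eta}2\widehat\omega(I)$, $\widehat\omega(I_+)=\frac{1-\eta}2\widehat\omega(I)$; if $I$ is the right child of its parent then $\widehat\omega(I_-)=\frac{1-\eta}2\widehat\omega(I)$, $\widehat\omega(I_+)=\frac{1+\eta}2\widehat\omega(I)$.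 Weights: $\widehat s^k_j=N^{-2k}/\widehat\omega(I^k_j)$; $\widehat{\dot\sigma}=\sum_{k\ge0}\sum_{j=1}^{2^k}\widehat s^k_j\,\delta_{\dot z^k_j}$. Flattened kernel: $K_\flat$ is defined first on $[N^{-1/2},N^{1/2}]$ as a smooth nonincreasing function with values in $[N^{-1/2},N^{1/2}]$ such that $K_\flat(x)=1/x$ for $N^{-1/2}\le x\le(\rho N)^{-1/2}$ and for $(\rho N)^{1/2}\le x\le N^{1/2}$, and $K_\flat(x)=1$ for $(\rho^2N)^{-1/2}\le x\le(\rho^2N)^{1/2}$; then extended to $(0,\infty)$ by $K_\flat(x)=N^{-k}K_\flat(N^{-k}x)$ for $x\in[N^{k-1/2},N^{k+1/2}]$, $k\in\mathbb Z$, and to $\mathbb R\setminus\{0\}$ as an odd function. $H_\flat\mu(x)=\int K_\flat(x-y)\,d\mu(y)$. *)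

theory Defs
  imports "HOL-Probability.Probability"
begin

text \<open>Generation-k intervals are indexed by j < 2^k (0-based, left to right).
  The children of interval (k,j) are (k+1,2j) (left) and (k+1,2j+1) (right).\<close>

fun cantor_left :: "nat \<Rightarrow> nat \<Rightarrow> nat \<Rightarrow> real" where
  "cantor_left N 0 j = 0"
| "cantor_left N (Suc k) j =
     cantor_left N k (j div 2) +
     (if odd j then (1 / real N) ^ k - (1 / real N) ^ Suc k else 0)"

definition cantor_int :: "nat \<Rightarrow> nat \<Rightarrow> nat \<Rightarrow> real set" where
  "cantor_int N k j = {cantor_left N k j .. cantor_left N k j + (1 / real N) ^ k}"

definition cantor_center :: "nat \<Rightarrow> nat \<Rightarrow> nat \<Rightarrow> real" where
  "cantor_center N k j = cantor_left N k j + (1 / real N) ^ k / 2"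

definition cantor_set :: "nat \<Rightarrow> real set" where
  "cantor_set N = (\<Inter>k. \<Union>j\<in>{..<2^k}. cantor_int N k j)"

definition is_redistributed_cantor_measure :: "nat \<Rightarrow> real measure \<Rightarrow> bool" where
  "is_redistributed_cantor_measure N \<omega> \<longleftrightarrow>
     sets \<omega> = sets borel \<and> prob_space \<omega> \<and>
     emeasure \<omega> (UNIV - cantor_set N) = 0 \<and>
     measure \<omega> (cantor_int N 1 0) = 1/2 \<and> measure \<omega> (cantor_int N 1 1) = 1/2 \<and>
     (\<forall>k\<ge>1. \<forall>j<2^k.
        (even j \<longrightarrow>
           measure \<omega> (cantor_int N (Suc k) (2*j)) = (1 + 1/real N)/2 * measure \<omega> (cantor_int N k j) \<and>
           measure \<omega> (cantor_int N (Suc k) (2*j+1)) = (1 - 1/real N)/2 * measure \<omega> (cantor_int N k j)) \<and>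
        (odd j \<longrightarrow>
           measure \<omega> (cantor_int N (Suc k) (2*j)) = (1 - 1/real N)/2 * measure \<omega> (cantor_int N k j) \<and>
           measure \<omega> (cantor_int N (Suc k) (2*j+1)) = (1 + 1/real N)/2 * measure \<omega> (cantor_int N k j)))"

definition cantor_weight :: "nat \<Rightarrow> real measure \<Rightarrow> nat \<Rightarrow> nat \<Rightarrow> real" where
  "cantor_weight N \<omega> k j = (1 / real N) ^ (2*k) / measure \<omega> (cantor_int N k j)"

definition smooth_on :: "real set \<Rightarrow> (real \<Rightarrow> real) \<Rightarrow> bool" where
  "smooth_on S f \<longleftrightarrow> (\<exists>D :: nat \<Rightarrow> real \<Rightarrow> real.
     (\<forall>x\<in>S. D 0 x = f x) \<and>
     (\<forall>n. \<forall>x\<in>S. (D n has_real_derivative D (Suc n) x) (at x)))"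

definition is_flat_kernel :: "nat \<Rightarrow> real \<Rightarrow> (real \<Rightarrow> real) \<Rightarrow> bool" where
  "is_flat_kernel N \<rho> K \<longleftrightarrow>
     (let a = real N powr (-1/2); b = real N powr (1/2) in
       smooth_on {a<..<b} K \<and>
       (\<forall>x\<in>{a..b}. \<forall>y\<in>{a..b}. x \<le> y \<longrightarrow> K y \<le> K x) \<and>
       (\<forall>x\<in>{a..b}. K x \<in> {a..b}) \<and>
       (\<forall>x. a \<le> x \<and> x \<le> (\<rho> * real N) powr (-1/2) \<longrightarrow> K x = 1 / x) \<and>
       (\<forall>x. (\<rho> * real N) powr (1/2) \<le> x \<and> x \<le> b \<longrightarrow> K x = 1 / x) \<and>
       (\<forall>x. (\<rho>^2 * real N) powr (-1/2) \<le> x \<and> x \<le> (\<rho>^2 * real N) powr (1/2) \<longrightarrow> K x = 1)) \<and>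
     (\<forall>k::int. \<forall>x. real N powr (real_of_int k - 1/2) \<le> x \<and> x \<le> real N powr (real_of_int k + 1/2)
        \<longrightarrow> K x = real N powr (- real_of_int k) * K (real N powr (- real_of_int k) * x)) \<and>
     (\<forall>x. K (- x) = - K x)"

definition H_flat_restr :: "(real \<Rightarrow> real) \<Rightarrow> real measure \<Rightarrow> real set \<Rightarrow> real \<Rightarrow> real" where
  "H_flat_restr K \<omega> I x = (\<integral>y. indicator I y * K (x - y) \<partial>\<omega>)"

end

theory Submission
  imports Defs
begin

text \<open>Seen from the center \<open>x\<close> of a generation-\<open>k\<close> cell, the flattened kernel is constant on
  each piece of the Cantor set: it equals \<open>\<plusminus>N^m\<close> on the sibling of the generation-\<open>(m+1)\<close>
  ancestor (\<open>m < k\<close>) and \<open>\<plusminus>N^k\<close> on the two children. So \<open>H_flat(\<one>_I \<omega>)(x)\<close> is a finite signed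
  sum of the masses of these pieces inside \<open>I\<close>. For \<open>I = \<real>\<close> the sum vanishes, which is what the
  redistribution of \<open>\<omega>\<close> is designed for, hence only the parts of the pieces outside \<open>I\<close> count,
  and these are controlled by \<open>N^m \<omega>(ancestor)\<close> over the ancestors not a.e. contained in \<open>I\<close>.
  After weighting, each term is bounded by \<open>64^(l-k) \<omega>(J)\<close> for the maximal full cell \<open>J\<close> of
  generation \<open>l\<close> above it, or by \<open>12 \<omega>(J)\<close> for a maximal full child \<open>J\<close>, or by \<open>\<omega>(I)\<close> for the
  (at most one) cell whose two children both leave \<open>I\<close>. Maximal full cells are disjoint, so
  summing gives the constant \<open>2 + 12 + 1\<close>.\<close>

definition ancestor :: "nat \<Rightarrow> nat \<Rightarrow> nat \<Rightarrow> nat" where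
  "ancestor k j m = j div 2^(k - m)"

definition sibling :: "nat \<Rightarrow> nat" where
  "sibling c = (if even c then c + 1 else c - 1)"

definition side_sign :: "nat \<Rightarrow> real" where
  "side_sign c = (if odd c then 1 else -1)"

lemma ancestor_self [simp]: "ancestor k j k = j"
  by (simp add: ancestor_def)

lemma ancestor_0: "j < 2^k \<Longrightarrow> ancestor k j 0 = 0"
  by (simp add: ancestor_def)

lemma ancestor_less: "j < 2^k \<Longrightarrow> m \<le> k \<Longrightarrow> ancestor k j m < 2^m"
  unfolding ancestor_def by (simp add: less_mult_imp_div_less power_add[symmetric])

lemma ancestor_ancestor: "m \<le> m' \<Longrightarrow> m' \<le> k \<Longrightarrow> ancestor k j m = ancestor k j m' div 2^(m' - m)"
proof -
  assume "m \<le> m'" "m' \<le> k"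
  then have "k - m = (k - m') + (m' - m)" by simp
  then show ?thesis unfolding ancestor_def by (simp add: power_add div_mult2_eq)
qed

lemma ancestor_Suc_div2: "m < k \<Longrightarrow> ancestor k j (Suc m) div 2 = ancestor k j m"
  using ancestor_ancestor[of m "Suc m" k j] by simp

lemma ancestor_of_parent: "m < k \<Longrightarrow> ancestor (Suc k) j (Suc m) = ancestor k (j div 2) (Suc m)"
proof -
  assume "m < k"
  then have "Suc k - Suc m = Suc (k - Suc m)" by simp
  then show ?thesis unfolding ancestor_def by (simp add: div_mult2_eq)
qed

lemma sibling_div2: "sibling c div 2 = c div 2"
  unfolding sibling_def by (cases "even c") (auto elim!: oddE)

lemma sibling_neq: "sibling c \<noteq> c"
  unfolding sibling_def by (cases "even c") (auto elim!: oddE)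

lemma sibling_less: "c < 2^Suc m \<Longrightarrow> sibling c < 2^Suc m"
  unfolding sibling_def by (cases "even c") (auto elim!: evenE)

lemma abs_side_sign [simp]: "\<bar>side_sign c\<bar> = 1"
  by (simp add: side_sign_def)

lemma sum_power_less_one_le:
  fixes x :: real
  assumes "0 \<le> x" "x < 1"
  shows "(\<Sum>d<n. x^d) \<le> 1 / (1 - x)"
proof -
  have "(\<Sum>d<n. x^d) = (1 - x^n) / (1 - x)"
    using assms by (simp add: sum_gp_strict)
  also have "\<dots> \<le> 1 / (1 - x)"
    using assms by (intro divide_right_mono) auto
  finally show ?thesis .
qed

text \<open>The pairs \<open>(k, j)\<close> with \<open>j div 2^(k - l) = i\<close> index the descendants of cell \<open>(l, i)\<close>,
  \<open>2^(k - l)\<close> of them in generation \<open>k\<close>.\<close>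

lemma sum_descendants_power_le:
  fixes Z :: "(nat \<times> nat) set" and x :: real
  assumes "finite Z" "Z \<subseteq> {(k, j). l \<le> k \<and> j div 2^(k - l) = i}" "0 \<le> x" "2 * x < 1"
  shows "(\<Sum>z\<in>Z. x^(fst z - l)) \<le> 1 / (1 - 2 * x)"
proof -
  obtain n where n: "\<forall>z\<in>Z. fst z < l + n"
  proof -
    obtain n where "\<forall>k\<in>fst ` Z. k \<le> n"
      using assms(1) finite_nat_set_iff_bounded_le by blast
    then show ?thesis by (intro that[of "Suc n"]) auto
  qed
  define B where "B k = {i * 2^(k - l) ..< (i + 1) * 2^(k - l)}" for k
  define Y where "Y = Sigma {l..<l + n} B"
  have "Z \<subseteq> Y"
  proof
    fix z assume z: "z \<in> Z"
    obtain k j where zkj: "z = (k, j)" by fastforce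
    have "l \<le> k" "j div 2^(k - l) = i" "k < l + n" using assms(2) n z zkj by auto
    then show "z \<in> Y"
      using div_times_less_eq_dividend[of j "2^(k - l)"] dividend_less_div_times[of "2^(k - l)" j]
      unfolding Y_def B_def zkj by (auto simp: algebra_simps)
  qed
  then have "(\<Sum>z\<in>Z. x^(fst z - l)) \<le> (\<Sum>z\<in>Y. x^(fst z - l))"
    using assms(3) by (intro sum_mono2) (auto simp: Y_def B_def)
  also have "\<dots> = (\<Sum>k\<in>{l..<l + n}. \<Sum>j\<in>B k. x^(k - l))"
    unfolding Y_def by (subst sum.Sigma) (auto simp: B_def split_def)
  also have "\<dots> = (\<Sum>k\<in>{l..<l + n}. real (2^(k - l)) * x^(k - l))"
    by (simp add: B_def algebra_simps)
  also have "\<dots> = (\<Sum>d<n. (2 * x)^d)"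
    by (simp add: sum.atLeastLessThan_shift_0[of _ l "l + n"] power_mult_distrib atLeast0LessThan)
  also have "\<dots> \<le> 1 / (1 - 2 * x)"
    using assms by (intro sum_power_less_one_le) auto
  finally show ?thesis .
qed

locale cantor_intervals =
  fixes N :: nat
  assumes N_ge_3: "3 \<le> N"
begin

abbreviation len :: "nat \<Rightarrow> real" where "len k \<equiv> (1 / real N)^k"
abbreviation left :: "nat \<Rightarrow> nat \<Rightarrow> real" where "left \<equiv> cantor_left N"
abbreviation cell :: "nat \<Rightarrow> nat \<Rightarrow> real set" where "cell \<equiv> cantor_int N"
abbreviation center :: "nat \<Rightarrow> nat \<Rightarrow> real" where "center \<equiv> cantor_center N"

lemma len_pos: "0 < len k"
  using N_ge_3 by simp

lemma len_Suc_le: "3 * len (Suc k) \<le> len k"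
proof -
  have "3 * len (Suc k) = len k * (3 / real N)" by (simp add: field_simps)
  also have "\<dots> \<le> len k * 1"
    using N_ge_3 len_pos[of k] by (intro mult_left_mono) auto
  finally show ?thesis by simp
qed

lemma power_mult_len: "real N ^ m * len m = 1"
  using N_ge_3 by (simp add: power_one_over)

lemma cell_eq: "cell k j = {left k j .. left k j + len k}"
  by (simp add: cantor_int_def)

lemma left_child_eq: "cell (Suc k) (2 * j) = {left k j .. left k j + len (Suc k)}"
  by (simp add: cantor_int_def)

lemma right_child_eq: "cell (Suc k) (2 * j + 1) = {left k j + len k - len (Suc k) .. left k j + len k}"
  by (simp add: cantor_int_def)

lemma center_eq: "center k j = left k j + len k / 2"
  by (simp add: cantor_center_def)

lemma center_in_cell: "center k j \<in> cell k j"
  using len_pos[of k] by (simp add: center_eq cell_eq)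

lemma left_child_less_center: "y \<in> cell (Suc k) (2 * j) \<Longrightarrow> y < center k j"
  using len_Suc_le[of k] len_pos[of "Suc k"] by (simp add: center_eq cell_eq)

lemma center_less_right_child: "y \<in> cell (Suc k) (2 * j + 1) \<Longrightarrow> center k j < y"
  using len_Suc_le[of k] len_pos[of "Suc k"] by (simp add: center_eq cell_eq)

lemma cell_Suc_subset: "cell (Suc k) j \<subseteq> cell k (j div 2)"
  using len_Suc_le[of k] len_pos[of "Suc k"] by (auto simp: cell_eq)

lemma children_subset: "cell (Suc k) (2 * j) \<subseteq> cell k j" "cell (Suc k) (2 * j + 1) \<subseteq> cell k j"
  using cell_Suc_subset[of k "2 * j"] cell_Suc_subset[of k "2 * j + 1"] by auto

lemma cell_add_subset: "cell (k + d) j \<subseteq> cell k (j div 2^d)"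
proof (induction d arbitrary: j)
  case (Suc d)
  have "cell (k + Suc d) j \<subseteq> cell (k + d) (j div 2)"
    using cell_Suc_subset[of "k + d" j] by simp
  also have "\<dots> \<subseteq> cell k (j div 2 div 2^d)" by (rule Suc)
  finally show ?case by (simp add: div_mult2_eq)
qed simp

lemma cell_ancestor_subset:
  "m \<le> m' \<Longrightarrow> m' \<le> k \<Longrightarrow> cell m' (ancestor k j m') \<subseteq> cell m (ancestor k j m)"
  using cell_add_subset[of m "m' - m" "ancestor k j m'"] ancestor_ancestor[of m m' k j] by simp

lemma cell_subset_ancestor: "m \<le> k \<Longrightarrow> cell k j \<subseteq> cell m (ancestor k j m)"
  using cell_ancestor_subset[of m k k j] by simp

lemma left_less_left: "j < j' \<Longrightarrow> j' < 2^k \<Longrightarrow> left k j + len k < left k j'"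
proof (induction k arbitrary: j j')
  case (Suc k)
  have le: "j div 2 \<le> j' div 2" using Suc.prems by (simp add: div_le_mono)
  have less: "j' div 2 < 2^k" using Suc.prems by (simp add: less_mult_imp_div_less)
  have len: "3 * len (Suc k) \<le> len k" "0 < len (Suc k)" by (rule len_Suc_le, rule len_pos)
  show ?case
  proof (cases "j div 2 = j' div 2")
    case True
    then have "even j" "odd j'" using Suc.prems by presburger+
    then show ?thesis using True len by (auto elim!: evenE oddE)
  next
    case False
    then have "left k (j div 2) + len k < left k (j' div 2)"
      using le less by (intro Suc.IH) auto
    moreover have "left (Suc k) j + len (Suc k) \<le> left k (j div 2) + len k"
      using cell_Suc_subset[of k j] len by (auto simp: cell_eq)
    moreover have "left k (j' div 2) \<le> left (Suc k) j'"
      using len by auto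
    ultimately show ?thesis by linarith
  qed
qed simp

lemma cell_disjoint: "j \<noteq> j' \<Longrightarrow> j < 2^k \<Longrightarrow> j' < 2^k \<Longrightarrow> cell k j \<inter> cell k j' = {}"
  using left_less_left[of j j' k] left_less_left[of j' j k]
  by (cases "j < j'") (auto simp: cell_eq)

lemma children_disjoint: "j < 2^k \<Longrightarrow> cell (Suc k) (2 * j) \<inter> cell (Suc k) (2 * j + 1) = {}"
  by (intro cell_disjoint) auto

lemma cell_disjoint_if_not_descendant:
  assumes "k \<le> k'" "j < 2^k" "j' < 2^k'" "j' div 2^(k' - k) \<noteq> j"
  shows "cell k j \<inter> cell k' j' = {}"
proof -
  have "cell k' j' \<subseteq> cell k (j' div 2^(k' - k))"
    using cell_add_subset[of k "k' - k" j'] assms(1) by simp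
  moreover have "j' div 2^(k' - k) < 2^k"
    using assms by (simp add: less_mult_imp_div_less power_add[symmetric])
  ultimately show ?thesis using cell_disjoint[OF assms(4) _ assms(2)] by blast
qed

lemma descendant_subset_child:
  assumes "k < k'" "j' div 2^(k' - k) = j"
  shows "cell k' j' \<subseteq> cell (Suc k) (2 * j) \<or> cell k' j' \<subseteq> cell (Suc k) (2 * j + 1)"
proof -
  define c where "c = j' div 2^(k' - Suc k)"
  have sub: "cell k' j' \<subseteq> cell (Suc k) c"
    using cell_add_subset[of "Suc k" "k' - Suc k" j'] assms(1) by (simp add: c_def)
  have "k' - k = Suc (k' - Suc k)" using assms(1) by simp
  then have "c div 2 = j" using assms(2) unfolding c_def by (metis div_mult2_eq mult.commute power_Suc)
  then have "c = 2 * j \<or> c = 2 * j + 1" by presburger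
  then show ?thesis using sub by auto
qed

text \<open>Seen from a point of \<open>cell k j\<close>, the rest of the Cantor set is the disjoint union of the
  cells \<open>sibling_cell k j m\<close>, \<open>m < k\<close>.\<close>

definition sibling_cell :: "nat \<Rightarrow> nat \<Rightarrow> nat \<Rightarrow> real set" where
  "sibling_cell k j m = cell (Suc m) (sibling (ancestor k j (Suc m)))"

lemma sibling_cell_subset: "m < k \<Longrightarrow> sibling_cell k j m \<subseteq> cell m (ancestor k j m)"
  unfolding sibling_cell_def
  using cell_Suc_subset[of m "sibling (ancestor k j (Suc m))"]
  by (simp add: sibling_div2 ancestor_Suc_div2)

lemma sibling_cell_disjoint:
  assumes "j < 2^k" "m < k"
  shows "sibling_cell k j m \<inter> cell (Suc m) (ancestor k j (Suc m)) = {}"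
proof -
  have "ancestor k j (Suc m) < 2^Suc m" using ancestor_less[of j k "Suc m"] assms by simp
  then show ?thesis
    unfolding sibling_cell_def by (intro cell_disjoint sibling_neq sibling_less)
qed

lemma notin_sibling_cell: "j < 2^k \<Longrightarrow> m < k \<Longrightarrow> y \<in> cell k j \<Longrightarrow> y \<notin> sibling_cell k j m"
  using sibling_cell_disjoint[of j k m] cell_subset_ancestor[of "Suc m" k j] by auto

lemma sibling_cells_disjoint:
  assumes "j < 2^k" "m < k" "m' < k" "m \<noteq> m'"
  shows "sibling_cell k j m \<inter> sibling_cell k j m' = {}"
proof -
  have *: "sibling_cell k j b \<inter> sibling_cell k j a = {}" if "a < b" "b < k" for a b
  proof -
    have "sibling_cell k j b \<subseteq> cell (Suc a) (ancestor k j (Suc a))"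
      using sibling_cell_subset[of b k j] cell_ancestor_subset[of "Suc a" b k j] that by auto
    then show ?thesis using sibling_cell_disjoint[of j k a] assms(1) that by auto
  qed
  show ?thesis using *[of m m'] *[of m' m] assms by (cases "m < m'") auto
qed

lemma cell_sibling_cell_cases:
  assumes "m < k"
  obtains "ancestor k j (Suc m) = 2 * ancestor k j m + 1"
      "sibling_cell k j m = cell (Suc m) (2 * ancestor k j m)"
      "cell k j \<subseteq> cell (Suc m) (2 * ancestor k j m + 1)"
  | "ancestor k j (Suc m) = 2 * ancestor k j m"
      "sibling_cell k j m = cell (Suc m) (2 * ancestor k j m + 1)"
      "cell k j \<subseteq> cell (Suc m) (2 * ancestor k j m)"
proof -
  have div2: "ancestor k j (Suc m) div 2 = ancestor k j m" using ancestor_Suc_div2[OF assms] .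
  have sub: "cell k j \<subseteq> cell (Suc m) (ancestor k j (Suc m))"
    using cell_subset_ancestor[of "Suc m" k j] assms by simp
  show ?thesis
  proof (cases "odd (ancestor k j (Suc m))")
    case True
    then have "ancestor k j (Suc m) = 2 * ancestor k j m + 1" using div2 by (auto elim!: oddE)
    then show ?thesis using that(1) sub by (simp add: sibling_cell_def sibling_def)
  next
    case False
    then have "ancestor k j (Suc m) = 2 * ancestor k j m" using div2 by (auto elim!: evenE)
    then show ?thesis using that(2) sub by (simp add: sibling_cell_def sibling_def)
  qed
qed

abbreviation cset :: "real set" where "cset \<equiv> cantor_set N"

lemma cantor_set_borel [measurable]: "cset \<in> sets borel"
  unfolding cantor_set_def by (auto simp: cantor_int_def)

lemma cantor_set_cover: "y \<in> cset \<Longrightarrow> \<exists>j<2^k. y \<in> cell k j"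
  unfolding cantor_set_def by auto

lemma cantor_set_subset_unit: "cset \<subseteq> cell 0 0"
  using cantor_set_cover[of _ 0] by auto

lemma cantor_set_in_child:
  assumes "y \<in> cset" "y \<in> cell k j" "j < 2^k"
  shows "y \<in> cell (Suc k) (2 * j) \<or> y \<in> cell (Suc k) (2 * j + 1)"
proof -
  obtain j' where j': "j' < 2^Suc k" "y \<in> cell (Suc k) j'"
    using cantor_set_cover[OF assms(1)] by blast
  have "j' div 2 = j"
    using cell_disjoint_if_not_descendant[of k "Suc k" j j'] j' assms by auto
  then have "j' = 2 * j \<or> j' = 2 * j + 1" by presburger
  then show ?thesis using j' by auto
qed

lemma cantor_set_in_sibling_cell:
  assumes "j < 2^k" "y \<in> cset" "y \<notin> cell k j"
  obtains m where "m < k" "y \<in> sibling_cell k j m"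
proof -
  define S where "S = {m. m \<le> k \<and> y \<in> cell m (ancestor k j m)}"
  define M where "M = Max S"
  have "finite S" "0 \<in> S"
    using ancestor_0[OF assms(1)] cantor_set_subset_unit assms(2) by (auto simp: S_def)
  then have "M \<in> S" "\<And>m. m \<in> S \<Longrightarrow> m \<le> M"
    unfolding M_def by (auto intro: Max_in Max_ge)
  then have M: "M \<le> k" "y \<in> cell M (ancestor k j M)"
    "\<And>m. m \<le> k \<Longrightarrow> y \<in> cell m (ancestor k j m) \<Longrightarrow> m \<le> M"
    by (auto simp: S_def)
  have Mk: "M < k" using M(1,2) assms(3) le_neq_implies_less by fastforce
  have "y \<notin> cell (Suc M) (ancestor k j (Suc M))" using M(3)[of "Suc M"] Mk by auto
  moreover have "y \<in> cell (Suc M) (2 * ancestor k j M) \<or> y \<in> cell (Suc M) (2 * ancestor k j M + 1)"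
    using cantor_set_in_child[OF assms(2) M(2)] ancestor_less[OF assms(1)] Mk by simp
  ultimately have "y \<in> sibling_cell k j M"
    by (cases rule: cell_sibling_cell_cases[OF Mk, of j]) auto
  then show ?thesis using Mk that by blast
qed

end

locale cantor_measure = cantor_intervals +
  fixes \<omega> :: "real measure"
  assumes redistributed: "is_redistributed_cantor_measure N \<omega>"
begin

abbreviation mass :: "nat \<Rightarrow> nat \<Rightarrow> real" where "mass k j \<equiv> measure \<omega> (cell k j)"

lemma sets_\<omega> [measurable_cong]: "sets \<omega> = sets borel"
  using redistributed by (simp add: is_redistributed_cantor_measure_def)

lemma space_\<omega>: "space \<omega> = UNIV"
  using sets_eq_imp_space_eq[OF sets_\<omega>] by simp

lemma prob_space_\<omega>: "prob_space \<omega>"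
  using redistributed by (simp add: is_redistributed_cantor_measure_def)

lemma finite_measure_\<omega>: "finite_measure \<omega>"
  using prob_space_\<omega> by (simp add: prob_space_def)

lemma cell_sets [simp]: "cell k j \<in> sets \<omega>"
  using sets_\<omega> by (simp add: cantor_int_def)

lemma sibling_cell_sets [simp]: "sibling_cell k j m \<in> sets \<omega>"
  by (simp add: sibling_cell_def)

lemma complement_cantor_set_null: "UNIV - cset \<in> null_sets \<omega>"
  using redistributed sets_\<omega> space_\<omega>
  by (auto simp: is_redistributed_cantor_measure_def null_sets_def)

lemma AE_cantor_set: "AE y in \<omega>. y \<in> cset"
  using complement_cantor_set_null by (intro AE_I') auto

lemma measure_mono_\<omega>: "A \<in> sets \<omega> \<Longrightarrow> B \<in> sets \<omega> \<Longrightarrow> A \<subseteq> B \<Longrightarrow> measure \<omega> A \<le> measure \<omega> B"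
  using finite_measure_\<omega> by (simp add: finite_measure.finite_measure_mono)

lemma measure_inter_eq_diff: "A \<in> sets \<omega> \<Longrightarrow> I \<in> sets \<omega> \<Longrightarrow> measure \<omega> (I \<inter> A) = measure \<omega> A - measure \<omega> (A - I)"
  using finite_measure.finite_measure_Diff'[OF finite_measure_\<omega>, of A I] by (simp add: Int_commute)

lemma mass_0: "mass 0 0 = 1"
proof -
  have "mass 0 0 = measure \<omega> (cell 0 0 - (UNIV - cset))"
    using complement_cantor_set_null by (simp add: measure_Diff_null_set)
  also have "cell 0 0 - (UNIV - cset) = UNIV - (UNIV - cset)"
    using cantor_set_subset_unit by auto
  also have "measure \<omega> \<dots> = measure \<omega> UNIV"
    using complement_cantor_set_null space_\<omega> by (simp add: measure_Diff_null_set)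
  also have "\<dots> = 1"
    using prob_space.prob_space[OF prob_space_\<omega>] space_\<omega> by simp
  finally show ?thesis .
qed

text \<open>The relative excess of the left child over the right child; the redistribution
  pushes mass towards the outer child of every cell of generation \<open>\<ge> 1\<close>.\<close>

definition tilt :: "nat \<Rightarrow> nat \<Rightarrow> real" where
  "tilt k j = (if k = 0 then 0 else if even j then 1 / real N else - 1 / real N)"

lemma mass_children:
  assumes "j < 2^k"
  shows "mass (Suc k) (2 * j) = (1 + tilt k j) / 2 * mass k j"
    and "mass (Suc k) (2 * j + 1) = (1 - tilt k j) / 2 * mass k j"
proof -
  have "mass (Suc k) (2 * j) = (1 + tilt k j) / 2 * mass k j
      \<and> mass (Suc k) (2 * j + 1) = (1 - tilt k j) / 2 * mass k j"
  proof (cases "k = 0")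
    case True
    then show ?thesis using assms redistributed mass_0
      by (simp add: is_redistributed_cantor_measure_def tilt_def)
  next
    case False
    then show ?thesis using assms redistributed
      by (cases "even j") (auto simp: is_redistributed_cantor_measure_def tilt_def)
  qed
  then show "mass (Suc k) (2 * j) = (1 + tilt k j) / 2 * mass k j"
    and "mass (Suc k) (2 * j + 1) = (1 - tilt k j) / 2 * mass k j" by auto
qed

lemma mass_children_add: "j < 2^k \<Longrightarrow> mass (Suc k) (2 * j) + mass (Suc k) (2 * j + 1) = mass k j"
  using mass_children[of j k] by (simp add: field_simps)

lemma mass_children_diff:
  "j < 2^k \<Longrightarrow> mass (Suc k) (2 * j) - mass (Suc k) (2 * j + 1) = tilt k j * mass k j"
  using mass_children[of j k] by (simp add: field_simps)

lemma mass_le_3_mass_child: "j < 2^Suc k \<Longrightarrow> mass k (j div 2) \<le> 3 * mass (Suc k) j"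
proof -
  assume j: "j < 2^Suc k"
  define c where "c = j div 2"
  have c: "c < 2^k" using j by (simp add: c_def less_mult_imp_div_less)
  have "\<bar>tilt k c\<bar> \<le> 1 / 3"
    using N_ge_3 by (auto simp: tilt_def field_simps)
  from mult_right_mono[OF this measure_nonneg]
  have "\<bar>tilt k c * mass k c\<bar> \<le> 1 / 3 * mass k c" by (simp add: abs_mult)
  moreover have "j = 2 * c \<or> j = 2 * c + 1" unfolding c_def by presburger
  ultimately show ?thesis
    using mass_children_add[OF c] mass_children_diff[OF c] unfolding c_def[symmetric]
    by (auto simp: abs_le_iff)
qed

lemma mass_pos: "j < 2^k \<Longrightarrow> 0 < mass k j"
proof (induction k arbitrary: j)
  case 0 then show ?case using mass_0 by simp
next
  case (Suc k)
  then have "0 < mass k (j div 2)" by (simp add: less_mult_imp_div_less)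
  then show ?case using mass_le_3_mass_child[OF Suc.prems] by linarith
qed

lemma mass_ancestor_le:
  assumes "j < 2^k" "m + d \<le> k"
  shows "mass m (ancestor k j m) \<le> 3^d * mass (m + d) (ancestor k j (m + d))"
  using assms(2)
proof (induction d)
  case (Suc d)
  have "ancestor k j (Suc (m + d)) < 2^Suc (m + d)"
    using ancestor_less[OF assms(1), of "Suc (m + d)"] Suc.prems by simp
  then have child: "mass (m + d) (ancestor k j (m + d)) \<le> 3 * mass (Suc (m + d)) (ancestor k j (Suc (m + d)))"
    using mass_le_3_mass_child ancestor_Suc_div2[of "m + d" k j] Suc.prems by fastforce
  have "mass m (ancestor k j m) \<le> 3^d * mass (m + d) (ancestor k j (m + d))"
    using Suc by simp
  also have "\<dots> \<le> 3^d * (3 * mass (Suc (m + d)) (ancestor k j (Suc (m + d))))"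
    using child by (intro mult_left_mono) auto
  also have "\<dots> = 3^Suc d * mass (m + Suc d) (ancestor k j (m + Suc d))"
    by simp
  finally show ?case .
qed simp

lemma sum_weight_ancestors_le:
  assumes "6 \<le> N" "j < 2^k" "M \<le> k"
  shows "(\<Sum>m\<le>M. real N ^ m * mass m (ancestor k j m)) \<le> 2 * real N ^ M * mass M (ancestor k j M)"
  using assms(3)
proof (induction M)
  case (Suc M)
  have "ancestor k j (Suc M) < 2^Suc M" using ancestor_less[OF assms(2), of "Suc M"] Suc.prems by blast
  then have child: "mass M (ancestor k j M) \<le> 3 * mass (Suc M) (ancestor k j (Suc M))"
    using mass_le_3_mass_child ancestor_Suc_div2[of M k j] Suc.prems by fastforce
  have "(\<Sum>m\<le>Suc M. real N ^ m * mass m (ancestor k j m))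
      \<le> 2 * real N ^ M * mass M (ancestor k j M) + real N ^ Suc M * mass (Suc M) (ancestor k j (Suc M))"
    using Suc by simp
  also have "\<dots> \<le> (6 + real N) * (real N ^ M * mass (Suc M) (ancestor k j (Suc M)))"
    using mult_left_mono[OF child, of "2 * real N ^ M"] by (simp add: algebra_simps)
  also have "\<dots> \<le> (2 * real N) * (real N ^ M * mass (Suc M) (ancestor k j (Suc M)))"
    using assms(1) by (intro mult_right_mono) auto
  finally show ?case by simp
qed simp

text \<open>\<open>step_value X k j\<close> is the value of \<open>H_flat(\<one>_X \<omega>)\<close> at \<open>center k j\<close>
  (\<open>abs_H_flat_restr_center_le\<close> below).\<close>

definition step_value :: "real set \<Rightarrow> nat \<Rightarrow> nat \<Rightarrow> real" where
  "step_value X k j =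
     (\<Sum>m<k. side_sign (ancestor k j (Suc m)) * real N ^ m * measure \<omega> (X \<inter> sibling_cell k j m))
     + real N ^ k * (measure \<omega> (X \<inter> cell (Suc k) (2 * j)) - measure \<omega> (X \<inter> cell (Suc k) (2 * j + 1)))"

text \<open>The redistribution of \<open>\<omega>\<close> is designed exactly so that the whole measure is balanced
  as seen from every center.\<close>

lemma step_value_UNIV: "j < 2^k \<Longrightarrow> step_value UNIV k j = 0"
proof (induction k arbitrary: j)
  case 0 then show ?case using mass_children_diff[of 0 0] by (simp add: step_value_def tilt_def)
next
  case (Suc k)
  define p where "p = j div 2"
  define S where "S = (\<Sum>m<k. side_sign (ancestor k p (Suc m)) * real N ^ m * mass (Suc m) (sibling (ancestor k p (Suc m))))"
  have p: "p < 2^k" using Suc.prems by (simp add: p_def less_mult_imp_div_less)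
  have IH: "S + real N ^ k * mass (Suc k) (2 * p) - real N ^ k * mass (Suc k) (2 * p + 1) = 0"
    using Suc.IH[OF p] by (simp add: step_value_def sibling_cell_def S_def right_diff_distrib)
  have "step_value UNIV (Suc k) j = S + side_sign j * real N ^ k * mass (Suc k) (sibling j)
      + real N ^ Suc k * (tilt (Suc k) j * mass (Suc k) j)"
    unfolding step_value_def sibling_cell_def mass_children_diff[OF Suc.prems, symmetric]
    by (simp add: ancestor_of_parent S_def p_def)
  also have "real N ^ Suc k * (tilt (Suc k) j * mass (Suc k) j)
      = (if even j then 1 else -1) * real N ^ k * mass (Suc k) j"
    using N_ge_3 by (simp add: tilt_def)
  finally show ?case
    using IH by (cases "even j") (auto simp: p_def sibling_def side_sign_def elim!: evenE oddE)
qed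

definition full :: "real set \<Rightarrow> nat \<Rightarrow> nat \<Rightarrow> bool" where
  "full I k j \<longleftrightarrow> measure \<omega> (cell k j - I) = 0"

lemma full_subset:
  "I \<in> sets \<omega> \<Longrightarrow> A \<subseteq> cell k j \<Longrightarrow> A \<in> sets \<omega> \<Longrightarrow> full I k j \<Longrightarrow> measure \<omega> (A - I) = 0"
proof -
  assume "I \<in> sets \<omega>" "A \<subseteq> cell k j" "A \<in> sets \<omega>" "full I k j"
  then have "measure \<omega> (A - I) \<le> measure \<omega> (cell k j - I)"
    by (intro measure_mono_\<omega>) auto
  with \<open>full I k j\<close> show ?thesis
    unfolding full_def using measure_nonneg[of \<omega> "A - I"] by linarith
qed

lemma full_descendant:
  assumes "I \<in> sets \<omega>" "m \<le> m'" "m' \<le> k" "full I m (ancestor k j m)"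
  shows "full I m' (ancestor k j m')"
  using full_subset[OF assms(1) cell_ancestor_subset[OF assms(2,3)] _ assms(4)] by (simp add: full_def)

lemma not_full_obtains_outside:
  assumes "\<not> full I k j"
  obtains y where "y \<in> cell k j" "y \<notin> I"
  using assms unfolding full_def by (metis Diff_eq_empty_iff measure_empty subsetI)

lemma step_value_eq_outside:
  assumes "j < 2^k" "I \<in> sets \<omega>"
  shows "step_value I k j =
    - (\<Sum>m<k. side_sign (ancestor k j (Suc m)) * real N ^ m * measure \<omega> (sibling_cell k j m - I))
    - real N ^ k * (measure \<omega> (cell (Suc k) (2 * j) - I) - measure \<omega> (cell (Suc k) (2 * j + 1) - I))"
proof -
  have "step_value I k j = step_value I k j - step_value UNIV k j"
    using step_value_UNIV[OF assms(1)] by simp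
  also have "\<dots> = - (\<Sum>m<k. side_sign (ancestor k j (Suc m)) * real N ^ m * measure \<omega> (sibling_cell k j m - I))
    - real N ^ k * (measure \<omega> (cell (Suc k) (2 * j) - I) - measure \<omega> (cell (Suc k) (2 * j + 1) - I))"
    unfolding step_value_def using assms(2)
    by (simp add: measure_inter_eq_diff sum_subtractf[symmetric] sum_negf[symmetric] algebra_simps
        flip: sum.distrib)
  finally show ?thesis .
qed

definition nonfull_weight :: "real set \<Rightarrow> nat \<Rightarrow> nat \<Rightarrow> nat \<Rightarrow> real" where
  "nonfull_weight I k j m = (if full I m (ancestor k j m) then 0 else real N ^ m * mass m (ancestor k j m))"

lemma sibling_cell_outside_le:
  assumes "I \<in> sets \<omega>" "m < k"
  shows "real N ^ m * measure \<omega> (sibling_cell k j m - I) \<le> nonfull_weight I k j m"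
proof (cases "full I m (ancestor k j m)")
  case True
  then show ?thesis
    using full_subset[OF assms(1) sibling_cell_subset[OF assms(2)]] by (simp add: nonfull_weight_def)
next
  case False
  have "measure \<omega> (sibling_cell k j m - I) \<le> mass m (ancestor k j m)"
    using sibling_cell_subset[OF assms(2), of j] assms(1) by (intro measure_mono_\<omega>) auto
  from mult_left_mono[OF this, of "real N ^ m"] show ?thesis
    using False by (simp add: nonfull_weight_def)
qed

lemma children_outside_le:
  assumes "I \<in> sets \<omega>" "j < 2^k"
  shows "real N ^ k * (measure \<omega> (cell (Suc k) (2 * j) - I) + measure \<omega> (cell (Suc k) (2 * j + 1) - I))
    \<le> nonfull_weight I k j k"
proof (cases "full I k j")
  case True
  then show ?thesis
    using full_subset[OF assms(1) children_subset(1)] full_subset[OF assms(1) children_subset(2)]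
    by (simp add: nonfull_weight_def)
next
  case False
  have "measure \<omega> (cell (Suc k) (2 * j) - I) \<le> mass (Suc k) (2 * j)"
       "measure \<omega> (cell (Suc k) (2 * j + 1) - I) \<le> mass (Suc k) (2 * j + 1)"
    using assms(1) by (intro measure_mono_\<omega>; auto)+
  then have "measure \<omega> (cell (Suc k) (2 * j) - I) + measure \<omega> (cell (Suc k) (2 * j + 1) - I) \<le> mass k j"
    using mass_children_add[OF assms(2)] by linarith
  from mult_left_mono[OF this, of "real N ^ k"] show ?thesis
    using False by (simp add: nonfull_weight_def)
qed

lemma abs_step_value_le:
  assumes "j < 2^k" "I \<in> sets \<omega>"
  shows "\<bar>step_value I k j\<bar> \<le> (\<Sum>m\<le>k. nonfull_weight I k j m)"
proof -
  let ?L = "measure \<omega> (cell (Suc k) (2 * j) - I)" and ?R = "measure \<omega> (cell (Suc k) (2 * j + 1) - I)"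
  have "\<bar>\<Sum>m<k. side_sign (ancestor k j (Suc m)) * real N ^ m * measure \<omega> (sibling_cell k j m - I)\<bar>
      \<le> (\<Sum>m<k. nonfull_weight I k j m)"
    using sibling_cell_outside_le[OF assms(2)]
    by (intro order.trans[OF sum_abs sum_mono]) (simp add: abs_mult)
  moreover have "\<bar>?L - ?R\<bar> \<le> ?L + ?R" by (simp add: abs_le_iff)
  from mult_left_mono[OF this, of "real N ^ k"]
  have "\<bar>real N ^ k * (?L - ?R)\<bar> \<le> real N ^ k * (?L + ?R)" by (simp add: abs_mult)
  ultimately have "\<bar>step_value I k j\<bar> \<le> (\<Sum>m<k. nonfull_weight I k j m) + nonfull_weight I k j k"
    using children_outside_le[OF assms(2,1)] unfolding step_value_eq_outside[OF assms] by linarith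
  then show ?thesis by (simp add: lessThan_Suc_atMost[symmetric])
qed

end

lemma flat_kernel_odd: "is_flat_kernel N \<rho> K \<Longrightarrow> K (- x) = - K x"
  unfolding is_flat_kernel_def by blast

text \<open>Since \<open>\<rho>\<^sup>2 N \<ge> 64/9\<close>, the interval \<open>[3/8, 1]\<close> lies in the plateau of \<open>K\<close>.\<close>

lemma flat_kernel_plateau:
  assumes "16 \<le> N" "2/3 \<le> \<rho>" "is_flat_kernel N \<rho> K" "3/8 \<le> x" "x \<le> 1"
  shows "K x = 1"
proof -
  have "(2/3)^2 \<le> \<rho>^2" using assms(2) by (intro power_mono) auto
  then have "(8/3)^2 \<le> \<rho>^2 * real N"
    using assms(1) mult_mono[of "(2/3)^2" "\<rho>^2" 16 "real N"] by (simp add: power2_eq_square)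
  then have sq: "8/3 \<le> sqrt (\<rho>^2 * real N)" by (rule real_le_rsqrt)
  have "(\<rho>^2 * real N) powr (-1/2) = 1 / sqrt (\<rho>^2 * real N)"
    using sq by (simp add: powr_minus_divide powr_half_sqrt)
  also have "\<dots> \<le> 1 / (8/3)"
    using sq assms(1,2) by (intro divide_left_mono) (auto simp: zero_less_mult_iff)
  also have "\<dots> \<le> x" using assms(4) by simp
  finally have "(\<rho>^2 * real N) powr (-1/2) \<le> x" .
  moreover have "x \<le> (\<rho>^2 * real N) powr (1/2)"
    using sq assms(5) by (simp add: powr_half_sqrt)
  ultimately show ?thesis
    using assms(3) unfolding is_flat_kernel_def Let_def by blast
qed

lemma flat_kernel_rescale:
  assumes "16 \<le> N" "is_flat_kernel N \<rho> K" "3/8 \<le> real N ^ m * x" "real N ^ m * x \<le> 1"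
  shows "K x = real N ^ m * K (real N ^ m * x)"
proof -
  have N: "0 < real N" "4 \<le> sqrt (real N)"
    using assms(1) real_le_rsqrt[of 4 "real N"] by auto
  have pow: "real N powr (- real m) = 1 / real N ^ m"
    using N by (simp add: powr_minus powr_realpow divide_inverse)
  have "real N powr (real_of_int (- int m) - 1/2) = (1 / real N ^ m) * (1 / sqrt (real N))"
    using N by (simp add: powr_diff pow powr_half_sqrt)
  also have "\<dots> \<le> (1 / real N ^ m) * (3/8)"
    using N by (intro mult_left_mono) (auto simp: divide_le_eq)
  also have "\<dots> \<le> x" using assms(3) N by (simp add: field_simps)
  finally have lower: "real N powr (real_of_int (- int m) - 1/2) \<le> x" .
  have "x \<le> 1 / real N ^ m" using assms(4) N by (simp add: field_simps)
  also have "\<dots> \<le> (1 / real N ^ m) * sqrt (real N)"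
    using N mult_left_mono[of 1 "sqrt (real N)" "1 / real N ^ m"] by simp
  also have "\<dots> = real N powr (real_of_int (- int m) + 1/2)"
    using N by (simp add: powr_diff powr_half_sqrt powr_realpow)
  finally have upper: "x \<le> real N powr (real_of_int (- int m) + 1/2)" .
  have "K x = real N powr (- real_of_int (- int m)) * K (real N powr (- real_of_int (- int m)) * x)"
    using assms(2) lower upper unfolding is_flat_kernel_def by blast
  then show ?thesis
    using N by (simp add: powr_realpow)
qed

locale cantor_kernel = cantor_intervals +
  fixes \<rho> :: real and K :: "real \<Rightarrow> real"
  assumes N_ge_16: "16 \<le> N" and rho_ge: "2/3 \<le> \<rho>" and flat: "is_flat_kernel N \<rho> K"
begin

lemma kernel_eq_power: "3/8 * len m \<le> t \<Longrightarrow> t \<le> len m \<Longrightarrow> K t = real N ^ m"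
proof -
  assume t: "3/8 * len m \<le> t" "t \<le> len m"
  have "real N ^ m * (3/8 * len m) = 3/8" "real N ^ m * len m = 1"
    using power_mult_len[of m] by (simp_all only: mult.left_commute)
  then have "3/8 \<le> real N ^ m * t" "real N ^ m * t \<le> 1"
    using mult_left_mono[OF t(1), of "real N ^ m"] mult_left_mono[OF t(2), of "real N ^ m"] by simp_all
  then show ?thesis
    using flat_kernel_rescale[OF N_ge_16 flat] flat_kernel_plateau[OF N_ge_16 rho_ge flat] by simp
qed

lemma kernel_eq_neg_power: "3/8 * len m \<le> t \<Longrightarrow> t \<le> len m \<Longrightarrow> K (- t) = - (real N ^ m)"
  using kernel_eq_power flat_kernel_odd[OF flat] by simp

lemma len_Suc_le_16: "16 * len (Suc k) \<le> len k"
  using N_ge_16 len_pos[of k] mult_left_mono[of "16 / real N" 1 "len k"] by (simp add: field_simps)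

lemma kernel_on_sibling_cell:
  assumes "j < 2^k" "m < k" "y \<in> sibling_cell k j m"
  shows "K (center k j - y) = side_sign (ancestor k j (Suc m)) * real N ^ m"
proof -
  have z: "center k j \<in> cell k j" by (rule center_in_cell)
  have far: "3/8 * len m \<le> len m - 2 * len (Suc m)" using len_Suc_le_16[of m] len_pos[of m] by linarith
  show ?thesis
  proof (cases rule: cell_sibling_cell_cases[OF assms(2), of j])
    case 1
    then have "3/8 * len m \<le> center k j - y" "center k j - y \<le> len m"
      using assms(3) z far by (auto simp: cell_eq)
    then show ?thesis using 1 kernel_eq_power by (simp add: side_sign_def)
  next
    case 2
    then have "3/8 * len m \<le> y - center k j" "y - center k j \<le> len m"
      using assms(3) z far by (auto simp: cell_eq)
    then show ?thesis using 2 kernel_eq_neg_power[of m "y - center k j"] by (simp add: side_sign_def)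
  qed
qed

lemma kernel_on_children:
  shows "y \<in> cell (Suc k) (2 * j) \<Longrightarrow> K (center k j - y) = real N ^ k"
    and "y \<in> cell (Suc k) (2 * j + 1) \<Longrightarrow> K (center k j - y) = - (real N ^ k)"
proof -
  have len: "16 * len (Suc k) \<le> len k" "0 < len (Suc k)" by (rule len_Suc_le_16, rule len_pos)
  show "y \<in> cell (Suc k) (2 * j) \<Longrightarrow> K (center k j - y) = real N ^ k"
    unfolding left_child_eq atLeastAtMost_iff center_eq using len by (intro kernel_eq_power) auto
  show "y \<in> cell (Suc k) (2 * j + 1) \<Longrightarrow> K (center k j - y) = - (real N ^ k)"
    unfolding right_child_eq atLeastAtMost_iff center_eq using len kernel_eq_neg_power[of k "y - center k j"]
    by (auto simp: center_eq)
qed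

lemma kernel_center_eq_step:
  assumes "j < 2^k" "y \<in> cset"
  shows "K (center k j - y) =
    (\<Sum>m<k. side_sign (ancestor k j (Suc m)) * real N ^ m * indicator (sibling_cell k j m) y)
    + real N ^ k * (indicator (cell (Suc k) (2 * j)) y - indicator (cell (Suc k) (2 * j + 1)) y)"
proof (cases "y \<in> cell k j")
  case True
  then have "(\<Sum>m<k. side_sign (ancestor k j (Suc m)) * real N ^ m * indicator (sibling_cell k j m) y) = 0"
    using notin_sibling_cell[OF assms(1)] by (intro sum.neutral) auto
  then show ?thesis
    using cantor_set_in_child[OF assms(2) True assms(1)] children_disjoint[OF assms(1)] kernel_on_children
    by (auto simp: indicator_def)
next
  case False
  then obtain M where M: "M < k" "y \<in> sibling_cell k j M"
    using cantor_set_in_sibling_cell[OF assms] by blast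
  have "(\<Sum>m<k. side_sign (ancestor k j (Suc m)) * real N ^ m * indicator (sibling_cell k j m) y)
      = side_sign (ancestor k j (Suc M)) * real N ^ M"
    using M sibling_cells_disjoint[OF assms(1) M(1)]
    by (subst sum.remove[of _ M]) (auto intro!: sum.neutral simp: indicator_def)
  moreover have "y \<notin> cell (Suc k) (2 * j)" "y \<notin> cell (Suc k) (2 * j + 1)"
    using False children_subset by blast+
  ultimately show ?thesis using kernel_on_sibling_cell[OF assms(1) M] by simp
qed

end

locale flat_cantor = cantor_measure + cantor_kernel
begin

definition step_function :: "real set \<Rightarrow> nat \<Rightarrow> nat \<Rightarrow> real \<Rightarrow> real" where
  "step_function I k j y =
     (\<Sum>m<k. side_sign (ancestor k j (Suc m)) * real N ^ m * indicator (I \<inter> sibling_cell k j m) y)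
     + real N ^ k * (indicator (I \<inter> cell (Suc k) (2 * j)) y - indicator (I \<inter> cell (Suc k) (2 * j + 1)) y)"

lemma integrable_indicator_\<omega>: "I \<in> sets \<omega> \<Longrightarrow> A \<in> sets \<omega> \<Longrightarrow> integrable \<omega> (indicator (I \<inter> A) :: real \<Rightarrow> real)"
  using finite_measure.emeasure_finite[OF finite_measure_\<omega>] by (auto simp: less_top)

lemma has_integral_step_function:
  assumes "I \<in> sets \<omega>"
  shows "integrable \<omega> (step_function I k j)" "integral\<^sup>L \<omega> (step_function I k j) = step_value I k j"
proof -
  note ind = integrable_indicator_\<omega>[OF assms]
  let ?S = "\<lambda>y. \<Sum>m<k. side_sign (ancestor k j (Suc m)) * real N ^ m * indicator (I \<inter> sibling_cell k j m) y"
  let ?C = "\<lambda>y. real N ^ k * (indicator (I \<inter> cell (Suc k) (2 * j)) y - indicator (I \<inter> cell (Suc k) (2 * j + 1)) y)"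
  have sib: "integrable \<omega> (\<lambda>y. side_sign (ancestor k j (Suc m)) * real N ^ m * indicator (I \<inter> sibling_cell k j m) y)" for m
    using ind by simp
  have S: "integrable \<omega> ?S" by (intro Bochner_Integration.integrable_sum sib)
  have C: "integrable \<omega> ?C" using ind by simp
  have "integral\<^sup>L \<omega> ?S = (\<Sum>m<k. side_sign (ancestor k j (Suc m)) * real N ^ m * measure \<omega> (I \<inter> sibling_cell k j m))"
    by (subst Bochner_Integration.integral_sum) (use sib in \<open>auto simp: space_\<omega>\<close>)
  moreover have "integral\<^sup>L \<omega> ?C = real N ^ k * (measure \<omega> (I \<inter> cell (Suc k) (2 * j)) - measure \<omega> (I \<inter> cell (Suc k) (2 * j + 1)))"
    using ind by (simp add: Bochner_Integration.integral_diff space_\<omega>)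
  ultimately show "integral\<^sup>L \<omega> (step_function I k j) = step_value I k j"
    unfolding step_function_def step_value_def using S C by simp
  show "integrable \<omega> (step_function I k j)"
    unfolding step_function_def using S C by simp
qed

text \<open>\<open>H_flat_restr\<close> is a Bochner integral, hence \<open>0\<close> if the integrand is not integrable.\<close>

lemma abs_H_flat_restr_center_le:
  assumes "j < 2^k" "I \<in> sets borel"
  shows "\<bar>H_flat_restr K \<omega> I (center k j)\<bar> \<le> \<bar>step_value I k j\<bar>"
proof -
  have I: "I \<in> sets \<omega>" using assms(2) sets_\<omega> by simp
  let ?f = "\<lambda>y. indicator I y * K (center k j - y)"
  have "AE y in \<omega>. ?f y = step_function I k j y"
    using AE_cantor_set
    by eventually_elim (simp add: kernel_center_eq_step[OF assms(1)] step_function_def indicator_def)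
  then have "integrable \<omega> ?f \<Longrightarrow> integral\<^sup>L \<omega> ?f = step_value I k j"
    using has_integral_step_function[OF I] by (metis integral_cong_AE integrable_cong_AE borel_measurable_integrable)
  then show ?thesis
    unfolding H_flat_restr_def by (cases "integrable \<omega> ?f") (auto simp: not_integrable_integral_eq)
qed


definition energy :: "real set \<Rightarrow> nat \<Rightarrow> nat \<Rightarrow> real" where
  "energy I k j = cantor_weight N \<omega> k j * \<bar>H_flat_restr K \<omega> I (center k j)\<bar>^2"

lemma energy_nonneg: "0 \<le> energy I k j"
  by (simp add: energy_def cantor_weight_def)

lemma energy_le:
  assumes "j < 2^k" "I \<in> sets borel" "\<bar>step_value I k j\<bar> \<le> B"
  shows "energy I k j \<le> len (2 * k) / mass k j * B^2"
proof -
  have "\<bar>H_flat_restr K \<omega> I (center k j)\<bar>^2 \<le> B^2"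
    using abs_H_flat_restr_center_le[OF assms(1,2)] assms(3) by (intro power_mono) auto
  then show ?thesis
    unfolding energy_def cantor_weight_def using mass_pos[OF assms(1)] by (intro mult_left_mono) auto
qed

lemma N_ge_6: "6 \<le> N"
  using N_ge_16 by simp

lemma energy_le_not_full:
  assumes "j < 2^k" "I \<in> sets borel" "\<not> full I k j"
  shows "energy I k j \<le> 4 * mass k j"
proof -
  have I: "I \<in> sets \<omega>" using assms(2) sets_\<omega> by simp
  have "\<not> full I m (ancestor k j m)" if "m \<le> k" for m
    using full_descendant[OF I that, of k j] assms(3) by auto
  then have "(\<Sum>m\<le>k. nonfull_weight I k j m) = (\<Sum>m\<le>k. real N ^ m * mass m (ancestor k j m))"
    by (simp add: nonfull_weight_def)
  then have "\<bar>step_value I k j\<bar> \<le> 2 * real N ^ k * mass k j"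
    using abs_step_value_le[OF assms(1) I] sum_weight_ancestors_le[OF N_ge_6 assms(1), of k] by simp
  then have "energy I k j \<le> len (2 * k) / mass k j * (2 * real N ^ k * mass k j)^2"
    by (rule energy_le[OF assms(1,2)])
  also have "\<dots> = 4 * (real N ^ k * len k)^2 * mass k j"
    using mass_pos[OF assms(1)] by (simp add: power_mult_distrib power_mult field_simps power2_eq_square)
  finally show ?thesis by (simp add: power_mult_len)
qed

lemma power_mult_len_decay: "real N ^ (2 * M) * len (2 * (M + d + 1)) * 36 * 3^d \<le> (1/64)^d"
proof -
  have len2: "len 2 \<le> 1/256"
    using N_ge_16 power_mono[of "1 / real N" "1/16" 2] by (simp add: field_simps power2_eq_square)
  have "2 * (M + d + 1) = 2 * M + (2 + 2 * d)" by simp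
  then have "len (2 * (M + d + 1)) = len (2 * M) * (len 2 * (len 2)^d)"
    by (simp only: power_add power_mult)
  then have "real N ^ (2 * M) * len (2 * (M + d + 1)) * 36 * 3^d = (36 * len 2) * (3 * len 2)^d"
    using power_mult_len[of "2 * M"] by (simp add: power_mult_distrib algebra_simps)
  also have "\<dots> \<le> 1 * (1/64)^d"
    using len2 by (intro mult_mono power_mono) auto
  finally show ?thesis by simp
qed

text \<open>If the cells of \<open>center k j\<close> stop being full below generation \<open>M\<close>, the factor \<open>N^(-2k)\<close>
  in the weight beats the growth of \<open>N^M\<close> and of the mass ratios, with room to spare.\<close>

lemma energy_le_below_full:
  assumes "j < 2^k" "I \<in> sets borel" "M < k"
    and nonfull: "\<And>m. m \<le> k \<Longrightarrow> \<not> full I m (ancestor k j m) \<longleftrightarrow> m \<le> M"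
  shows "energy I k j \<le> (1/64)^(k - Suc M) * mass (Suc M) (ancestor k j (Suc M))"
proof -
  define d where "d = k - Suc M"
  define m1 where "m1 = mass (Suc M) (ancestor k j (Suc M))"
  have k: "k = M + d + 1" using assms(3) by (simp add: d_def)
  have I: "I \<in> sets \<omega>" using assms(2) sets_\<omega> by simp
  have pos: "0 < mass k j" by (rule mass_pos[OF assms(1)])
  have "ancestor k j (Suc M) < 2^Suc M" using ancestor_less[OF assms(1), of "Suc M"] assms(3) by simp
  then have child: "mass M (ancestor k j M) \<le> 3 * m1"
    using mass_le_3_mass_child ancestor_Suc_div2[OF assms(3), of j] by (fastforce simp: m1_def)
  have "\<not> full I m (ancestor k j m)" if "m \<le> M" for m
    using nonfull[of m] that assms(3) by simp
  moreover have "full I m (ancestor k j m)" if "M < m" "m \<le> k" for m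
    using nonfull[of m] that by simp
  ultimately have "(\<Sum>m\<le>k. nonfull_weight I k j m) = (\<Sum>m\<le>M. real N ^ m * mass m (ancestor k j m))"
    using assms(3) by (intro sum.mono_neutral_cong_right) (auto simp: nonfull_weight_def)
  also have "\<dots> \<le> 2 * real N ^ M * mass M (ancestor k j M)"
    using sum_weight_ancestors_le[OF N_ge_6 assms(1)] assms(3) by simp
  also have "\<dots> \<le> 2 * real N ^ M * (3 * m1)"
    using child by (intro mult_left_mono) auto
  finally have "\<bar>step_value I k j\<bar> \<le> 6 * real N ^ M * m1"
    using abs_step_value_le[OF assms(1) I] by simp
  then have "energy I k j \<le> len (2 * k) / mass k j * (6 * real N ^ M * m1)^2"
    by (rule energy_le[OF assms(1,2)])
  also have "\<dots> = (real N ^ (2 * M) * len (2 * k) * 36) * (m1 * (m1 / mass k j))"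
  proof -
    have "real N ^ (2 * M) = real N ^ M * real N ^ M" by (simp add: mult_2 power_add)
    then show ?thesis using pos by (simp add: power_mult_distrib field_simps power2_eq_square)
  qed
  also have "\<dots> \<le> (real N ^ (2 * M) * len (2 * k) * 36) * (m1 * 3^d)"
    using mass_ancestor_le[OF assms(1), of "Suc M" d] k pos
    by (intro mult_left_mono) (auto simp: m1_def divide_le_eq)
  also have "\<dots> = (real N ^ (2 * M) * len (2 * (M + d + 1)) * 36 * 3^d) * m1"
    using k by (simp add: algebra_simps)
  also have "\<dots> \<le> (1/64)^d * m1"
    using power_mult_len_decay[of M d] by (intro mult_right_mono) (auto simp: m1_def)
  finally show ?thesis by (simp add: d_def m1_def)
qed

definition straddles :: "real set \<Rightarrow> nat \<Rightarrow> nat \<Rightarrow> bool" where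
  "straddles I k j \<longleftrightarrow> j < 2^k \<and> center k j \<in> I \<and> \<not> full I (Suc k) (2 * j) \<and> \<not> full I (Suc k) (2 * j + 1)"

lemma straddles_obtains_outside:
  assumes "straddles I k j"
  obtains yL yR where "yL \<in> cell (Suc k) (2 * j)" "yL \<notin> I" "yR \<in> cell (Suc k) (2 * j + 1)" "yR \<notin> I"
  using assms unfolding straddles_def by (metis not_full_obtains_outside)

text \<open>Every sibling cell lies beyond one of the two children, hence beyond a point outside \<open>I\<close>.\<close>

lemma straddling_interval_disjoint_sibling_cell:
  assumes "straddles I k j" "is_interval I" "m < k"
  shows "I \<inter> sibling_cell k j m = {}"
proof (rule ccontr)
  assume "I \<inter> sibling_cell k j m \<noteq> {}"
  then obtain p where p: "p \<in> I" "p \<in> sibling_cell k j m" by blast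
  obtain yL yR where y: "yL \<in> cell (Suc k) (2 * j)" "yL \<notin> I" "yR \<in> cell (Suc k) (2 * j + 1)" "yR \<notin> I"
    using straddles_obtains_outside[OF assms(1)] .
  have z: "center k j \<in> I" using assms(1) by (simp add: straddles_def)
  have convex: "x \<in> I" if "a \<in> I" "b \<in> I" "a \<le> x" "x \<le> b" for a b x
    using assms(2) that unfolding is_interval_1 by blast
  have len: "3 * len (Suc m) \<le> len m" by (rule len_Suc_le)
  let ?a = "ancestor k j m"
  show False
  proof (cases rule: cell_sibling_cell_cases[OF assms(3), of j])
    case 1
    have "yL \<in> cell (Suc m) (2 * ?a + 1)" using y(1) children_subset(1) 1(3) by blast
    moreover have "p \<le> left m ?a + len (Suc m)"
      using p(2) 1(2) by (simp only: left_child_eq atLeastAtMost_iff)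
    ultimately have "p \<le> yL" using len len_pos[of "Suc m"] by (simp only: right_child_eq atLeastAtMost_iff) linarith
    then show False using convex[OF p(1) z] y(2) left_child_less_center[OF y(1)] by simp
  next
    case 2
    have "yR \<in> cell (Suc m) (2 * ?a)" using y(3) children_subset(2) 2(3) by blast
    moreover have "left m ?a + len m - len (Suc m) \<le> p"
      using p(2) 2(2) by (simp only: right_child_eq atLeastAtMost_iff)
    ultimately have "yR \<le> p" using len len_pos[of "Suc m"] by (simp only: left_child_eq atLeastAtMost_iff) linarith
    then show False using convex[OF z p(1)] y(4) center_less_right_child[OF y(3)] by simp
  qed
qed

lemma energy_le_straddling:
  assumes "straddles I k j" "is_interval I"
  shows "energy I k j \<le> measure \<omega> I"
proof -
  have j: "j < 2^k" using assms(1) by (simp add: straddles_def)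
  have Ib: "I \<in> sets borel" using assms(2) by (rule real_interval_borel_measurable)
  then have I: "I \<in> sets \<omega>" using sets_\<omega> by simp
  define a where "a = measure \<omega> (I \<inter> cell (Suc k) (2 * j))"
  define b where "b = measure \<omega> (I \<inter> cell (Suc k) (2 * j + 1))"
  have nonneg: "0 \<le> a" "0 \<le> b" by (simp_all add: a_def b_def)
  have "step_value I k j = real N ^ k * (a - b)"
    unfolding step_value_def a_def b_def
    using straddling_interval_disjoint_sibling_cell[OF assms] by simp
  moreover have "\<bar>a - b\<bar> \<le> a + b" using nonneg by simp
  ultimately have "\<bar>step_value I k j\<bar> \<le> real N ^ k * (a + b)"
    by (simp add: abs_mult mult_left_mono)
  then have "energy I k j \<le> len (2 * k) / mass k j * (real N ^ k * (a + b))^2"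
    by (rule energy_le[OF j Ib])
  also have "\<dots> = (real N ^ k * len k)^2 * ((a + b) * ((a + b) / mass k j))"
    using mass_pos[OF j] by (simp add: power_mult_distrib power_mult field_simps power2_eq_square)
  also have "\<dots> \<le> (a + b) * 1"
  proof -
    have "a \<le> mass (Suc k) (2 * j)" "b \<le> mass (Suc k) (2 * j + 1)"
      unfolding a_def b_def using I by (intro measure_mono_\<omega>; auto)+
    then have "(a + b) / mass k j \<le> 1"
      using mass_children_add[OF j] mass_pos[OF j] by simp
    from mult_left_mono[OF this, of "a + b"] show ?thesis using nonneg by (simp add: power_mult_len)
  qed
  also have "\<dots> = measure \<omega> ((I \<inter> cell (Suc k) (2 * j)) \<union> (I \<inter> cell (Suc k) (2 * j + 1)))"
  proof -
    have "(I \<inter> cell (Suc k) (2 * j)) \<inter> (I \<inter> cell (Suc k) (2 * j + 1)) = {}"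
      using children_disjoint[OF j] by blast
    from finite_measure.finite_measure_Union[OF finite_measure_\<omega> sets.Int[OF I cell_sets] sets.Int[OF I cell_sets] this]
    show ?thesis by (simp add: a_def b_def)
  qed
  also have "\<dots> \<le> measure \<omega> I" using I by (intro measure_mono_\<omega> sets.Un sets.Int) auto
  finally show ?thesis .
qed

lemma straddling_unique_aux:
  assumes "straddles I k j" "straddles I k' j'" "is_interval I" "center k j \<le> center k' j'"
  shows "k = k' \<and> j = j'"
proof -
  have j: "j < 2^k" "j' < 2^k'" and z: "center k j \<in> I" "center k' j' \<in> I"
    using assms(1,2) by (auto simp: straddles_def)
  have convex: "x \<in> I" if "a \<in> I" "b \<in> I" "a \<le> x" "x \<le> b" for a b x
    using assms(3) that unfolding is_interval_1 by blast
  obtain y where y: "y \<in> cell (Suc k) (2 * j + 1)" "y \<notin> I"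
    using straddles_obtains_outside[OF assms(1)] by metis
  obtain y' where y': "y' \<in> cell (Suc k') (2 * j')" "y' \<notin> I"
    using straddles_obtains_outside[OF assms(2)] by metis
  have "center k' j' < y" "y' < center k j"
    using convex[OF z, of y] convex[OF z, of y'] y y' assms(4)
      center_less_right_child[OF y(1)] left_child_less_center[OF y'(1)] by fastforce+
  then have in_cell: "center k' j' \<in> cell k j" "center k j \<in> cell k' j'"
    using center_in_cell[of k j] center_in_cell[of k' j'] children_subset y(1) y'(1) assms(4)
    by (fastforce simp: cell_eq)+
  have not_child: "center k j \<notin> cell (Suc k) (2 * j)" "center k j \<notin> cell (Suc k) (2 * j + 1)"
    "center k' j' \<notin> cell (Suc k') (2 * j')" "center k' j' \<notin> cell (Suc k') (2 * j' + 1)"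
    using left_child_less_center center_less_right_child by fastforce+
  show ?thesis
  proof (cases k k' rule: linorder_cases)
    case less
    then have "j' div 2^(k' - k) = j"
      using cell_disjoint_if_not_descendant[of k k' j j'] j in_cell(2) center_in_cell[of k j] by fastforce
    then show ?thesis using descendant_subset_child[OF less] in_cell(2) not_child(1,2) by blast
  next
    case equal
    then show ?thesis using cell_disjoint[of j j' k] j in_cell(1) center_in_cell[of k' j'] by fastforce
  next
    case greater
    then have "j div 2^(k - k') = j'"
      using cell_disjoint_if_not_descendant[of k' k j' j] j in_cell(1) center_in_cell[of k' j'] by fastforce
    then show ?thesis using descendant_subset_child[OF greater] in_cell(1) not_child(3,4) by blast
  qed
qed

lemma straddling_unique:
  "straddles I k j \<Longrightarrow> straddles I k' j' \<Longrightarrow> is_interval I \<Longrightarrow> (k, j) = (k', j')"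
  using straddling_unique_aux[of I k j k' j'] straddling_unique_aux[of I k' j' k j]
  by (cases "center k j \<le> center k' j'") auto

definition maximal_full :: "real set \<Rightarrow> nat \<Rightarrow> nat \<Rightarrow> bool" where
  "maximal_full I l i \<longleftrightarrow> 0 < l \<and> i < 2^l \<and> full I l i \<and> \<not> full I (l - 1) (i div 2)"

lemma deepest_nonfull_ancestor:
  assumes "I \<in> sets \<omega>" "j < 2^k" "\<not> full I 0 0"
  obtains M where "M \<le> k" "\<And>m. m \<le> k \<Longrightarrow> \<not> full I m (ancestor k j m) \<longleftrightarrow> m \<le> M"
proof -
  define S where "S = {m. m \<le> k \<and> \<not> full I m (ancestor k j m)}"
  define M where "M = Max S"
  have "finite S" "0 \<in> S" using assms(2,3) by (auto simp: S_def ancestor_0)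
  then have "M \<in> S" "\<And>m. m \<in> S \<Longrightarrow> m \<le> M" unfolding M_def by (auto intro: Max_in Max_ge)
  then have "M \<le> k" "\<not> full I m (ancestor k j m) \<longleftrightarrow> m \<le> M" if "m \<le> k" for m
    using full_descendant[OF assms(1), of m M k j] that by (auto simp: S_def)
  then show ?thesis using that by blast
qed

lemma energy_cases_not_full:
  assumes "j < 2^k" "center k j \<in> I" "I \<in> sets borel" "\<not> full I k j"
  shows "(\<exists>c. c div 2 = j \<and> maximal_full I (Suc k) c \<and> energy I k j \<le> 12 * mass (Suc k) c)
    \<or> straddles I k j"
proof -
  have energy: "energy I k j \<le> 4 * mass k j" by (rule energy_le_not_full[OF assms(1,3,4)])
  have children: "2 * j < 2^Suc k" "2 * j + 1 < 2^Suc k" using assms(1) by auto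
  then have "mass k j \<le> 3 * mass (Suc k) (2 * j)" "mass k j \<le> 3 * mass (Suc k) (2 * j + 1)"
    using mass_le_3_mass_child by fastforce+
  then consider (left) "maximal_full I (Suc k) (2 * j)" "energy I k j \<le> 12 * mass (Suc k) (2 * j)"
    | (right) "maximal_full I (Suc k) (2 * j + 1)" "energy I k j \<le> 12 * mass (Suc k) (2 * j + 1)"
    | (straddle) "straddles I k j"
    using assms(1,2,4) energy children by (fastforce simp: maximal_full_def straddles_def)
  then show ?thesis
  proof cases
    case left then show ?thesis by (metis div_mult_self1_is_m zero_less_numeral)
  next
    case right
    moreover have "(2 * j + 1) div 2 = j" by simp
    ultimately show ?thesis by blast
  qed auto
qed

lemma energy_cases:
  assumes "j < 2^k" "center k j \<in> I" "is_interval I"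
  shows "energy I k j \<le> 0
    \<or> (\<exists>l\<le>k. maximal_full I l (ancestor k j l) \<and> energy I k j \<le> (1/64)^(k - l) * mass l (ancestor k j l))
    \<or> (\<exists>c. c div 2 = j \<and> maximal_full I (Suc k) c \<and> energy I k j \<le> 12 * mass (Suc k) c)
    \<or> straddles I k j"
proof -
  have Ib: "I \<in> sets borel" using assms(3) by (rule real_interval_borel_measurable)
  then have I: "I \<in> sets \<omega>" using sets_\<omega> by simp
  show ?thesis
  proof (cases "full I 0 0")
    case True
    then have "full I m (ancestor k j m)" if "m \<le> k" for m
      using full_descendant[OF I, of 0 m k j] that ancestor_0[OF assms(1)] by simp
    then have "\<bar>step_value I k j\<bar> \<le> 0"
      using abs_step_value_le[OF assms(1) I] by (simp add: nonfull_weight_def)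
    from energy_le[OF assms(1) Ib this] show ?thesis by simp
  next
    case False
    obtain M where M: "M \<le> k" "\<And>m. m \<le> k \<Longrightarrow> \<not> full I m (ancestor k j m) \<longleftrightarrow> m \<le> M"
      using deepest_nonfull_ancestor[OF I assms(1) False] by blast
    show ?thesis
    proof (cases "M < k")
      case True
      have "maximal_full I (Suc M) (ancestor k j (Suc M))"
        using M(2)[of "Suc M"] M(2)[of M] True ancestor_less[OF assms(1), of "Suc M"] ancestor_Suc_div2[OF True]
        by (auto simp: maximal_full_def)
      then show ?thesis using energy_le_below_full[OF assms(1) Ib True M(2)] True by fastforce
    next
      case False
      then have "\<not> full I k j" using M(2)[of k] by simp
      then show ?thesis using energy_cases_not_full[OF assms(1,2) Ib] by blast
    qed
  qed
qed

lemma maximal_full_disjoint: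
  assumes "I \<in> sets \<omega>" "maximal_full I l i" "maximal_full I l' i'" "l \<le> l'" "(l, i) \<noteq> (l', i')"
  shows "cell l i \<inter> cell l' i' = {}"
proof (cases "i' div 2^(l' - l) = i")
  case False
  then show ?thesis
    using cell_disjoint_if_not_descendant[OF assms(4)] assms(2,3) by (auto simp: maximal_full_def)
next
  case True
  then have less: "l < l'" using assms(4,5) by (cases "l = l'") auto
  then have "l' - l = Suc (l' - 1 - l)" by simp
  then have "i' div 2 div 2^(l' - 1 - l) = i" using True by (metis div_mult2_eq power_Suc)
  then have "cell (l' - 1) (i' div 2) \<subseteq> cell l i"
    using cell_add_subset[of l "l' - 1 - l" "i' div 2"] less by simp
  then have "full I (l' - 1) (i' div 2)"
    using full_subset[OF assms(1)] assms(2) by (simp add: maximal_full_def full_def)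
  then show ?thesis using assms(3) by (simp add: maximal_full_def)
qed

lemma sum_mass_maximal_full_le:
  assumes "I \<in> sets \<omega>" "finite X" "\<And>l i. (l, i) \<in> X \<Longrightarrow> maximal_full I l i"
  shows "(\<Sum>(l, i)\<in>X. mass l i) \<le> measure \<omega> I"
proof -
  define A where "A = (\<lambda>(l, i). I \<inter> cell l i)"
  have mass: "mass l i = measure \<omega> (A (l, i))" if "(l, i) \<in> X" for l i
    using assms(3)[OF that] measure_inter_eq_diff[OF cell_sets assms(1)]
    by (simp add: A_def maximal_full_def full_def)
  have "disjoint_family_on A X"
    unfolding disjoint_family_on_def
  proof (intro ballI impI)
    fix F F' assume F: "F \<in> X" "F' \<in> X" "F \<noteq> F'"
    obtain l i l' i' where e: "F = (l, i)" "F' = (l', i')" by fastforce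
    have mf: "maximal_full I l i" "maximal_full I l' i'" using F assms(3) e by auto
    have "cell l i \<inter> cell l' i' = {}"
    proof (cases "l \<le> l'")
      case True
      then show ?thesis using maximal_full_disjoint[OF assms(1) mf True] F e by auto
    next
      case False
      then show ?thesis using maximal_full_disjoint[OF assms(1) mf(2,1)] F e by auto
    qed
    then show "A F \<inter> A F' = {}" unfolding A_def e by auto
  qed
  then have "(\<Sum>F\<in>X. measure \<omega> (A F)) = measure \<omega> (\<Union>F\<in>X. A F)"
    using assms(1,2)
    by (intro finite_measure.finite_measure_finite_Union[OF finite_measure_\<omega>, symmetric]) (auto simp: A_def)
  also have "\<dots> \<le> measure \<omega> I"
    using assms(1,2) by (intro measure_mono_\<omega> sets.finite_UN) (auto simp: A_def split: prod.split)
  finally show ?thesis using mass by (simp add: split_def)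
qed

lemma sum_energy_below_maximal_full_le:
  assumes "I \<in> sets \<omega>" "finite S"
    and below: "\<And>k j. (k, j) \<in> S \<Longrightarrow> \<exists>l\<le>k. maximal_full I l (ancestor k j l)
        \<and> energy I k j \<le> (1/64)^(k - l) * mass l (ancestor k j l)"
  shows "(\<Sum>(k, j)\<in>S. energy I k j) \<le> 2 * measure \<omega> I"
proof -
  obtain f where f: "\<And>k j. (k, j) \<in> S \<Longrightarrow> f (k, j) \<le> k \<and> maximal_full I (f (k, j)) (ancestor k j (f (k, j)))
      \<and> energy I k j \<le> (1/64)^(k - f (k, j)) * mass (f (k, j)) (ancestor k j (f (k, j)))"
    using bchoice[of S "\<lambda>(k, j) l. l \<le> k \<and> maximal_full I l (ancestor k j l)
      \<and> energy I k j \<le> (1/64)^(k - l) * mass l (ancestor k j l)"] below by fastforce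
  define F where "F = (\<lambda>(k, j). (f (k, j), ancestor k j (f (k, j))))"
  have "(\<Sum>(k, j)\<in>S. energy I k j) = (\<Sum>(l, i)\<in>F ` S. \<Sum>(k, j)\<in>{z\<in>S. F z = (l, i)}. energy I k j)"
    using sum.image_gen[OF assms(2)] by (simp add: split_def)
  also have "\<dots> \<le> (\<Sum>(l, i)\<in>F ` S. 2 * mass l i)"
  proof (intro sum_mono, clarify)
    fix l i
    define Z where "Z = {z\<in>S. F z = (l, i)}"
    have Z: "f z = l" "ancestor (fst z) (snd z) l = i" "l \<le> fst z"
      "energy I (fst z) (snd z) \<le> (1/64)^(fst z - l) * mass l i" if "z \<in> Z" for z
      using that f[of "fst z" "snd z"] by (auto simp: Z_def F_def split_def)
    have "(\<Sum>(k, j)\<in>Z. energy I k j) \<le> (\<Sum>z\<in>Z. (1/64)^(fst z - l)) * mass l i"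
      unfolding sum_distrib_right split_def using Z(4) by (intro sum_mono) auto
    also have "\<dots> \<le> 2 * mass l i"
    proof (intro mult_right_mono)
      have "(\<Sum>z\<in>Z. (1/64::real)^(fst z - l)) \<le> 1 / (1 - 2 * (1/64))"
        using assms(2) Z(2,3) by (intro sum_descendants_power_le) (auto simp: Z_def ancestor_def)
      then show "(\<Sum>z\<in>Z. (1/64::real)^(fst z - l)) \<le> 2" by simp
    qed auto
    finally show "(\<Sum>(k, j)\<in>{z\<in>S. F z = (l, i)}. energy I k j) \<le> 2 * mass l i" by (simp add: Z_def)
  qed
  also have "\<dots> \<le> 2 * measure \<omega> I"
  proof -
    have "maximal_full I l i" if "(l, i) \<in> F ` S" for l i
      using that f by (auto simp: F_def)
    from sum_mass_maximal_full_le[OF assms(1) finite_imageI[OF assms(2), of F] this]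
    show ?thesis by (simp add: split_def flip: sum_distrib_left)
  qed
  finally show ?thesis .
qed

lemma sum_energy_maximal_full_child_le:
  assumes "I \<in> sets \<omega>" "finite S"
    and child: "\<And>k j. (k, j) \<in> S \<Longrightarrow> \<exists>c. c div 2 = j \<and> maximal_full I (Suc k) c \<and> energy I k j \<le> 12 * mass (Suc k) c"
  shows "(\<Sum>(k, j)\<in>S. energy I k j) \<le> 12 * measure \<omega> I"
proof -
  obtain f where f: "\<And>k j. (k, j) \<in> S \<Longrightarrow> f (k, j) div 2 = j \<and> maximal_full I (Suc k) (f (k, j))
      \<and> energy I k j \<le> 12 * mass (Suc k) (f (k, j))"
    using bchoice[of S "\<lambda>(k, j) c. c div 2 = j \<and> maximal_full I (Suc k) c \<and> energy I k j \<le> 12 * mass (Suc k) c"]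
      child by fastforce
  define F where "F = (\<lambda>(k, j). (Suc k, f (k, j)))"
  have "inj_on F S"
  proof (intro inj_onI)
    fix z z' assume z: "z \<in> S" "z' \<in> S" "F z = F z'"
    obtain k j k' j' where e: "z = (k, j)" "z' = (k', j')" by fastforce
    then have "k = k'" "f (k, j) = f (k', j')" using z(3) by (auto simp: F_def)
    then show "z = z'" using f[of k j] f[of k' j'] z(1,2) e by metis
  qed
  have "(\<Sum>(k, j)\<in>S. energy I k j) \<le> (\<Sum>(k, j)\<in>S. 12 * mass (Suc k) (f (k, j)))"
    using f by (intro sum_mono) (auto simp: split_def)
  also have "\<dots> = (\<Sum>(l, i)\<in>F ` S. 12 * mass l i)"
    unfolding sum.reindex[OF \<open>inj_on F S\<close>] by (simp add: F_def split_def comp_def)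
  also have "\<dots> = 12 * (\<Sum>(l, i)\<in>F ` S. mass l i)"
    by (simp add: sum_distrib_left split_def)
  also have "\<dots> \<le> 12 * measure \<omega> I"
  proof -
    have "maximal_full I l i" if "(l, i) \<in> F ` S" for l i
      using that f by (auto simp: F_def)
    from sum_mass_maximal_full_le[OF assms(1) finite_imageI[OF assms(2), of F] this] show ?thesis by simp
  qed
  finally show ?thesis .
qed

lemma sum_energy_straddling_le:
  assumes "is_interval I" "finite S" "\<And>k j. (k, j) \<in> S \<Longrightarrow> straddles I k j"
  shows "(\<Sum>(k, j)\<in>S. energy I k j) \<le> measure \<omega> I"
proof (cases "S = {}")
  case False
  then obtain k j where z: "(k, j) \<in> S" by auto
  have "S = {(k, j)}"
  proof (intro equalityI subsetI)
    fix z assume "z \<in> S"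
    moreover obtain a b where "z = (a, b)" by fastforce
    ultimately show "z \<in> {(k, j)}"
      using straddling_unique[OF assms(3) assms(3)[OF z] assms(1)] by simp
  qed (use z in simp)
  then show ?thesis using energy_le_straddling[OF assms(3)[OF z] assms(1)] by simp
qed simp

lemma sum_energy_le:
  assumes "is_interval I" "finite S" "\<And>k j. (k, j) \<in> S \<Longrightarrow> j < 2^k \<and> center k j \<in> I"
  shows "(\<Sum>(k, j)\<in>S. energy I k j) \<le> 15 * measure \<omega> I"
proof -
  have I: "I \<in> sets \<omega>" using real_interval_borel_measurable[OF assms(1)] sets_\<omega> by simp
  define below where "below = (\<lambda>(k, j). \<exists>l\<le>k. maximal_full I l (ancestor k j l)
      \<and> energy I k j \<le> (1/64)^(k - l) * mass l (ancestor k j l))"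
  define child where "child = (\<lambda>(k, j). \<exists>c. c div 2 = j \<and> maximal_full I (Suc k) c \<and> energy I k j \<le> 12 * mass (Suc k) c)"
  define Sb where "Sb = {z\<in>S. below z}"
  define Sc where "Sc = {z\<in>S. \<not> below z \<and> child z}"
  define Se where "Se = {z\<in>S. \<not> below z \<and> \<not> child z \<and> straddles I (fst z) (snd z)}"
  have zero: "energy I k j = 0" if "(k, j) \<in> S - (Sb \<union> Sc \<union> Se)" for k j
  proof -
    have S: "(k, j) \<in> S" and "\<not> below (k, j)" "\<not> child (k, j)" "\<not> straddles I k j"
      using that by (auto simp: Sb_def Sc_def Se_def)
    then have "energy I k j \<le> 0"
      using energy_cases[of j k I] assms(1) assms(3)[OF S] unfolding below_def child_def prod.case by blast
    then show ?thesis using energy_nonneg[of I k j] by linarith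
  qed
  have "(\<Sum>(k, j)\<in>S. energy I k j) = (\<Sum>(k, j)\<in>Sb \<union> Sc \<union> Se. energy I k j)"
  proof (rule sum.mono_neutral_right)
    show "Sb \<union> Sc \<union> Se \<subseteq> S" by (auto simp: Sb_def Sc_def Se_def)
    show "\<forall>z\<in>S - (Sb \<union> Sc \<union> Se). (case z of (k, j) \<Rightarrow> energy I k j) = 0" using zero by auto
  qed (rule assms(2))
  also have "\<dots> = (\<Sum>(k, j)\<in>Sb. energy I k j) + (\<Sum>(k, j)\<in>Sc. energy I k j) + (\<Sum>(k, j)\<in>Se. energy I k j)"
    using assms(2) by (subst sum.union_disjoint, auto simp: Sb_def Sc_def Se_def)+
  also have "\<dots> \<le> 2 * measure \<omega> I + 12 * measure \<omega> I + measure \<omega> I"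
    using assms(2)
    by (intro add_mono sum_energy_below_maximal_full_le[OF I] sum_energy_maximal_full_child_le[OF I]
        sum_energy_straddling_le[OF assms(1)]) (auto simp: Sb_def Sc_def Se_def below_def child_def)
  finally show ?thesis by simp
qed

end

theorem mainTheorem7:
  fixes N :: nat and \<rho> :: real and K :: "real \<Rightarrow> real" and \<omega> :: "real measure"
  assumes "N \<ge> 16" and "2/3 \<le> \<rho>" and "\<rho> < 1"
    and "is_flat_kernel N \<rho> K"
    and "is_redistributed_cantor_measure N \<omega>"
  shows "\<exists>C::real. \<forall>I::real set. is_interval I \<longrightarrow>
     (let T = {(k, j). j < 2^k \<and> cantor_center N k j \<in> I};
          g = (\<lambda>(k, j). cantor_weight N \<omega> k j * \<bar>H_flat_restr K \<omega> I (cantor_center N k j)\<bar>^2)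
      in g summable_on T \<and> infsum g T \<le> C * measure \<omega> I)"
proof (intro exI[of _ 15] allI impI)
  interpret flat_cantor N \<omega> \<rho> K
    using assms by unfold_locales auto
  fix I :: "real set" assume I: "is_interval I"
  define T where "T = {(k, j). j < (2::nat)^k \<and> center k j \<in> I}"
  define g where "g = (\<lambda>(k, j). energy I k j)"
  have finite_sums: "sum g F \<le> 15 * measure \<omega> I" if "finite F" "F \<subseteq> T" for F
    using sum_energy_le[OF I that(1)] that(2) by (auto simp: g_def T_def)
  have "g summable_on T"
    using finite_sums energy_nonneg by (intro nonneg_bdd_above_summable_on bdd_aboveI) (auto simp: g_def)
  moreover have "infsum g T \<le> 15 * measure \<omega> I"
    by (rule infsum_le_finite_sums[OF \<open>g summable_on T\<close> finite_sums])
  ultimately show "let T = {(k, j). j < 2^k \<and> cantor_center N k j \<in> I};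
      g = (\<lambda>(k, j). cantor_weight N \<omega> k j * \<bar>H_flat_restr K \<omega> I (cantor_center N k j)\<bar>^2)
    in g summable_on T \<and> infsum g T \<le> 15 * measure \<omega> I"
    by (simp add: T_def g_def energy_def)
qed

end
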